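(* Suppose the SVI in extensive form has at least one solution and that $(ATA)^{-1}$ is outer Lipschitz continuous at $0$. Let $\{(x_k,w_k)\}$ be an infinite sequence generated by the IPHA. Then $\{(x_k,w_k)\}$ converges linearly to a solution $(x^*,w^* )$ of the SVI in extensive form in the norm $\|(x,w)\|_{M_r}=\sqrt{\|x\|^2+r^{-2}\|w\|^2}$.
   Context: Multistage setting: $\Xi$ is a finite set of scenarios $\xi=(\xi_1,\dots,\xi_N)$ with probabilities $p(\xi)>0$; $n=n_1+\dots+n_N$. $\mathcal L_n$ is the space of functions $x:\Xi\to\mathbb R^n$, $x(\xi)=(x_1(\xi),\dots,x_N(\xi))$, $x_j(\xi)\in\mathbb R^{n_j}$, with inner product $\langle x,w\rangle=\sum_{\xi}p(\xi)\sum_{j}\langle x_j(\xi),w_j(\xi)\rangle$ and norm $\|\cdot\|$. $\mathcal N=\{x\in\mathcal L_n: x_j(\xi)\text{ does not depend on }\xi_j,\dots,\xi_N\}$, $\mathcal M=\mathcal N^\perp$, with orthogonal projections $P_{\mathcal N},P_{\mathcal M}$. For each $\xi$, $C(\xi)\subset\mathbb R^n$ is nonempty closed convex and $F(\cdot,\xi):\mathbb R^n\to\mathbb R^n$ is continuous monotone; $\mathcal C=\{x\in\mathcal L_n: x(\xi)\in C(\xi)\ \forall\xi\}$ and $\mathcal F(x)(\xi)=F(x(\xi),\xi)$. $r>0$ fixed. SVI in extensive form: find $x\in\mathcal N$, $w\in\mathcal M$ with $-F(x(\xi),\xi)-w(\xi)\in N_{C(\xi)}(x(\xi))$ for all $\xi$.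 $T:\mathcal L_n\rightrightarrows\mathcal L_n$ is defined by $z\in T(y)\iff P_{\mathcal N}(z)+P_{\mathcal M}(y)\in(\mathcal F+N_{\mathcal C})(P_{\mathcal N}(y)+P_{\mathcal M}(z))$, and $A(u)=P_{\mathcal N}(u)+rP_{\mathcal M}(u)$. For $S=ATA$, $S^{-1}$ is outer Lipschitz continuous at $0$ if $S^{-1}(0)$ is closed and there exist $L_1,L_2\ge0$ with $S^{-1}(v)\subset S^{-1}(0)+L_1\|v\|B$ for all $v\in L_2B$, where $B$ is the closed unit ball of $\mathcal L_n$. IPHA: choose $x_0\in\mathcal N$, $w_0\in\mathcal M$, $\bar\sigma\in(0,1)$, $\theta\in(0,1)$. At iteration $k$: choose $\sigma_k\in[0,\bar\sigma)$, find $\hat x^k,\hat w^k\in\mathcal L_n$ with $r(x_k(\xi)-\hat x^k(\xi))-w_k(\xi)\in F(\hat w^k(\xi),\xi)+N_{C(\xi)}(\hat w^k(\xi))$ for all $\xi$, $\delta^k=\hat w^k-\hat x^k$, and $\|\delta^k\|^2\le\sigma_k^2(\|a_k\|^2+\|b_k\|^2)$, where $a_k=x_k-P_{\mathcal N}(\hat x^k)+P_{\mathcal M}(\hat w^k)$, $b_k=x_k-P_{\mathcal N}(\hat w^k)+P_{\mathcal M}(\hat x^k)$. If $b_k=0$ stop; otherwise choose $\tau_k\in[1-\theta,1+\theta]$, set $\alpha_k=\langle a_k,b_k\rangle/\|a_k\|^2$, $x_{k+1}=x_k-\tau_k\alpha_k(x_k-P_{\mathcal N}(\hat x^k))$, $w_{k+1}=w_k+\tau_k\alpha_k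 rP_{\mathcal M}(\hat w^k)$. *)

theory Defs
  imports "HOL-Analysis.Analysis"
begin

text \<open>Scenarios are the elements of a finite type 's; the scenario data
  (xi_1,...,xi_N) of scenario s is sc s :: nat => 'c (stage k component sc s k).
  Decision coordinates are indexed by a finite type 'i; stg i in {1..N} is the
  stage j of the block x_j containing coordinate i.  The space L_n is
  's => real^'i with the probability-weighted inner product.\<close>

definition ipL :: "('s::finite \<Rightarrow> real) \<Rightarrow> ('s \<Rightarrow> real^'i) \<Rightarrow> ('s \<Rightarrow> real^'i) \<Rightarrow> real" where
  "ipL p x w = (\<Sum>s\<in>UNIV. p s * inner (x s) (w s))"

definition normL :: "('s::finite \<Rightarrow> real) \<Rightarrow> ('s \<Rightarrow> real^'i) \<Rightarrow> real" where
  "normL p x = sqrt (ipL p x x)"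

text \<open>Nonanticipativity subspace: x_j(xi) does not depend on xi_j,...,xi_N.\<close>
definition NNset :: "('s \<Rightarrow> nat \<Rightarrow> 'c) \<Rightarrow> ('i \<Rightarrow> nat) \<Rightarrow> ('s \<Rightarrow> real^'i) set" where
  "NNset sc stg = {x. \<forall>s t i. (\<forall>k\<in>{1..<stg i}. sc s k = sc t k) \<longrightarrow> x s $ i = x t $ i}"

definition MMset :: "('s::finite \<Rightarrow> real) \<Rightarrow> ('s \<Rightarrow> real^'i) set \<Rightarrow> ('s \<Rightarrow> real^'i) set" where
  "MMset p V = {w. \<forall>x\<in>V. ipL p x w = 0}"

definition projL :: "('s::finite \<Rightarrow> real) \<Rightarrow> ('s \<Rightarrow> real^'i) set \<Rightarrow> ('s \<Rightarrow> real^'i) \<Rightarrow> ('s \<Rightarrow> real^'i)" where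
  "projL p V x = (THE y. y \<in> V \<and> (\<forall>z\<in>V. ipL p (\<lambda>s. x s - y s) z = 0))"

definition PN :: "('s::finite \<Rightarrow> real) \<Rightarrow> ('s \<Rightarrow> nat \<Rightarrow> 'c) \<Rightarrow> ('i \<Rightarrow> nat) \<Rightarrow> ('s \<Rightarrow> real^'i) \<Rightarrow> ('s \<Rightarrow> real^'i)" where
  "PN p sc stg = projL p (NNset sc stg)"

definition PM :: "('s::finite \<Rightarrow> real) \<Rightarrow> ('s \<Rightarrow> nat \<Rightarrow> 'c) \<Rightarrow> ('i \<Rightarrow> nat) \<Rightarrow> ('s \<Rightarrow> real^'i) \<Rightarrow> ('s \<Rightarrow> real^'i)" where
  "PM p sc stg = projL p (MMset p (NNset sc stg))"

definition normal_cone :: "(real^'i) set \<Rightarrow> real^'i \<Rightarrow> (real^'i) set" where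
  "normal_cone K x = (if x \<in> K then {v. \<forall>y\<in>K. inner v (y - x) \<le> 0} else {})"

definition CalC :: "('s \<Rightarrow> (real^'i) set) \<Rightarrow> ('s \<Rightarrow> real^'i) set" where
  "CalC C = {x. \<forall>s. x s \<in> C s}"

definition normal_coneL :: "('s::finite \<Rightarrow> real) \<Rightarrow> ('s \<Rightarrow> real^'i) set \<Rightarrow> ('s \<Rightarrow> real^'i) \<Rightarrow> ('s \<Rightarrow> real^'i) set" where
  "normal_coneL p K x = (if x \<in> K then {v. \<forall>y\<in>K. ipL p v (\<lambda>s. y s - x s) \<le> 0} else {})"

definition FNC :: "('s::finite \<Rightarrow> real) \<Rightarrow> (real^'i \<Rightarrow> 's \<Rightarrow> real^'i) \<Rightarrow> ('s \<Rightarrow> (real^'i) set)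
     \<Rightarrow> ('s \<Rightarrow> real^'i) \<Rightarrow> ('s \<Rightarrow> real^'i) set" where
  "FNC p F C u = {(\<lambda>s. F (u s) s + v s) | v. v \<in> normal_coneL p (CalC C) u}"

definition opT :: "('s::finite \<Rightarrow> real) \<Rightarrow> ('s \<Rightarrow> nat \<Rightarrow> 'c) \<Rightarrow> ('i \<Rightarrow> nat)
     \<Rightarrow> (real^'i \<Rightarrow> 's \<Rightarrow> real^'i) \<Rightarrow> ('s \<Rightarrow> (real^'i) set) \<Rightarrow> ('s \<Rightarrow> real^'i) \<Rightarrow> ('s \<Rightarrow> real^'i) set" where
  "opT p sc stg F C y = {z. (\<lambda>s. PN p sc stg z s + PM p sc stg y s)
       \<in> FNC p F C (\<lambda>s. PN p sc stg y s + PM p sc stg z s)}"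

definition opA :: "('s::finite \<Rightarrow> real) \<Rightarrow> ('s \<Rightarrow> nat \<Rightarrow> 'c) \<Rightarrow> ('i \<Rightarrow> nat) \<Rightarrow> real
     \<Rightarrow> ('s \<Rightarrow> real^'i) \<Rightarrow> ('s \<Rightarrow> real^'i)" where
  "opA p sc stg r u = (\<lambda>s. PN p sc stg u s + r *\<^sub>R PM p sc stg u s)"

definition Sinv :: "('s::finite \<Rightarrow> real) \<Rightarrow> ('s \<Rightarrow> nat \<Rightarrow> 'c) \<Rightarrow> ('i \<Rightarrow> nat)
     \<Rightarrow> (real^'i \<Rightarrow> 's \<Rightarrow> real^'i) \<Rightarrow> ('s \<Rightarrow> (real^'i) set) \<Rightarrow> real
     \<Rightarrow> ('s \<Rightarrow> real^'i) \<Rightarrow> ('s \<Rightarrow> real^'i) set" where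
  "Sinv p sc stg F C r v = {u. \<exists>z\<in>opT p sc stg F C (opA p sc stg r u). v = opA p sc stg r z}"

definition closedL :: "('s::finite \<Rightarrow> real) \<Rightarrow> ('s \<Rightarrow> real^'i) set \<Rightarrow> bool" where
  "closedL p S = (\<forall>u f. (\<forall>k. f k \<in> S) \<and> ((\<lambda>k. normL p (\<lambda>s. f k s - u s)) \<longlonglongrightarrow> 0) \<longrightarrow> u \<in> S)"

definition outer_lipschitz_at_0 :: "('s::finite \<Rightarrow> real) \<Rightarrow> (('s \<Rightarrow> real^'i) \<Rightarrow> ('s \<Rightarrow> real^'i) set) \<Rightarrow> bool" where
  "outer_lipschitz_at_0 p G =
     (closedL p (G (\<lambda>s. 0)) \<and>
      (\<exists>L1 L2. L1 \<ge> 0 \<and> L2 > 0 \<and>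
         (\<forall>v. normL p v \<le> L2 \<longrightarrow>
            (\<forall>u\<in>G v. \<exists>u0\<in>G (\<lambda>s. 0). normL p (\<lambda>s. u s - u0 s) \<le> L1 * normL p v))))"

definition svi_solution :: "('s::finite \<Rightarrow> real) \<Rightarrow> ('s \<Rightarrow> nat \<Rightarrow> 'c) \<Rightarrow> ('i \<Rightarrow> nat)
     \<Rightarrow> (real^'i \<Rightarrow> 's \<Rightarrow> real^'i) \<Rightarrow> ('s \<Rightarrow> (real^'i) set) \<Rightarrow> ('s \<Rightarrow> real^'i) \<Rightarrow> ('s \<Rightarrow> real^'i) \<Rightarrow> bool" where
  "svi_solution p sc stg F C x w =
     (x \<in> NNset sc stg \<and> w \<in> MMset p (NNset sc stg) \<and>
      (\<forall>s. - F (x s) s - w s \<in> normal_cone (C s) (x s)))"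

definition ipha_a :: "('s::finite \<Rightarrow> real) \<Rightarrow> ('s \<Rightarrow> nat \<Rightarrow> 'c) \<Rightarrow> ('i \<Rightarrow> nat)
     \<Rightarrow> ('s \<Rightarrow> real^'i) \<Rightarrow> ('s \<Rightarrow> real^'i) \<Rightarrow> ('s \<Rightarrow> real^'i) \<Rightarrow> ('s \<Rightarrow> real^'i)" where
  "ipha_a p sc stg xk xh wh = (\<lambda>s. xk s - PN p sc stg xh s + PM p sc stg wh s)"

definition ipha_b :: "('s::finite \<Rightarrow> real) \<Rightarrow> ('s \<Rightarrow> nat \<Rightarrow> 'c) \<Rightarrow> ('i \<Rightarrow> nat)
     \<Rightarrow> ('s \<Rightarrow> real^'i) \<Rightarrow> ('s \<Rightarrow> real^'i) \<Rightarrow> ('s \<Rightarrow> real^'i) \<Rightarrow> ('s \<Rightarrow> real^'i)" where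
  "ipha_b p sc stg xk xh wh = (\<lambda>s. xk s - PN p sc stg wh s + PM p sc stg xh s)"

end

theory Submission
  imports Defs
begin

text \<open>
  Spingarn's partial inverse turns the IPHA into a relaxed projection method. In the variable
  \<open>z = x - w / r\<close>, the \<open>M\<^sub>r\<close>-norm of \<open>(x, w)\<close> is the \<open>L\<^sub>n\<close>-norm of \<open>z\<close>, and every \<open>u \<in> S\<^sup>-\<^sup>1(0)\<close>
  encodes the solution \<open>(P\<^sub>N u, - r P\<^sub>M u)\<close>. By monotonicity of \<open>F + N\<^sub>C\<close>, the half-space
  \<open>{u. \<langle>a\<^sub>k, b\<^sub>k\<rangle> \<le> \<langle>a\<^sub>k, z\<^sub>k - u\<rangle>}\<close> contains \<open>S\<^sup>-\<^sup>1(0)\<close>, and \<open>z\<^sub>k\<^sub>+\<^sub>1\<close> is a relaxed projection of \<open>z\<^sub>k\<close>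
  onto it; the relative error criterion makes each step decrease \<open>\<parallel>z\<^sub>k - u\<parallel>\<^sup>2\<close> by a fixed
  multiple of \<open>\<parallel>a\<^sub>k\<parallel>\<^sup>2 + \<parallel>b\<^sub>k\<parallel>\<^sup>2\<close>. The point \<open>z\<^sub>k - b\<^sub>k\<close> lies in \<open>S\<^sup>-\<^sup>1(r a\<^sub>k)\<close>, so outer Lipschitz
  continuity bounds the distance from \<open>z\<^sub>k\<close> to \<open>S\<^sup>-\<^sup>1(0)\<close> by \<open>\<parallel>b\<^sub>k\<parallel> + L r \<parallel>a\<^sub>k\<parallel>\<close> whenever \<open>a\<^sub>k\<close>
  is small, and by Fejer monotonicity the distance is bounded anyway. Hence the distance to
  \<open>S\<^sup>-\<^sup>1(0)\<close> decays Q-linearly, and a Fejer monotone sequence with this property converges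
  R-linearly to a point of the closed set \<open>S\<^sup>-\<^sup>1(0)\<close>.
\<close>

section \<open>Fejer-type projection methods\<close>

lemma inner_lower_bound_of_relative_error:
  fixes a b :: "'a::real_inner"
  assumes "(norm (a - b))\<^sup>2 \<le> \<sigma>\<^sup>2 * ((norm a)\<^sup>2 + (norm b)\<^sup>2)"
  shows "(1 - \<sigma>\<^sup>2) * ((norm a)\<^sup>2 + (norm b)\<^sup>2) \<le> 2 * inner a b"
proof -
  have "(norm (a - b))\<^sup>2 = (norm a)\<^sup>2 + (norm b)\<^sup>2 - 2 * inner a b"
    by (simp add: power2_norm_eq_inner inner_diff_left inner_diff_right inner_commute)
  with assms show ?thesis by (simp add: algebra_simps)
qed

lemma relaxed_projection_step:
  fixes a b z u :: "'a::real_inner"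
  assumes separation: "inner a b \<le> inner a (z - u)"
    and angle: "e * ((norm a)\<^sup>2 + (norm b)\<^sup>2) \<le> 2 * inner a b" and "0 \<le> e" and "a \<noteq> 0"
    and relaxation: "\<bar>\<tau> - 1\<bar> \<le> \<theta>" "\<theta> \<le> 1"
  shows "(norm (z - (\<tau> * (inner a b / (norm a)\<^sup>2)) *\<^sub>R a - u))\<^sup>2
           \<le> (norm (z - u))\<^sup>2 - (1 - \<theta>\<^sup>2) * (e / 2)\<^sup>2 * ((norm a)\<^sup>2 + (norm b)\<^sup>2)"
proof -
  define S where "S = (norm a)\<^sup>2 + (norm b)\<^sup>2"
  define t where "t = inner a b"
  define n where "n = (norm a)\<^sup>2"
  define c where "c = \<tau> * (t / n)"
  have n: "0 < n" "n \<le> S" using \<open>a \<noteq> 0\<close> by (simp_all add: n_def S_def)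
  have t: "e / 2 * S \<le> t" using angle by (simp add: S_def t_def)
  moreover have "0 \<le> e / 2 * S" using \<open>0 \<le> e\<close> n by simp
  ultimately have "0 \<le> t" by linarith
  have "0 \<le> \<theta>" "0 \<le> \<tau>" using relaxation by linarith+
  have "(norm (z - c *\<^sub>R a - u))\<^sup>2 = (norm ((z - u) - c *\<^sub>R a))\<^sup>2"
    by (simp add: algebra_simps)
  also have "\<dots> = (norm (z - u))\<^sup>2 - 2 * c * inner a (z - u) + c\<^sup>2 * n"
    unfolding n_def power2_norm_eq_inner
    by (simp add: inner_diff_left inner_diff_right inner_commute algebra_simps power2_eq_square)
  also have "\<dots> \<le> (norm (z - u))\<^sup>2 - 2 * c * t + c\<^sup>2 * n"
  proof -
    have "0 \<le> c" using \<open>0 \<le> t\<close> \<open>0 \<le> \<tau>\<close> n by (simp add: c_def)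
    then have "c * t \<le> c * inner a (z - u)" using separation by (simp add: t_def mult_left_mono)
    then show ?thesis by linarith
  qed
  also have "\<dots> = (norm (z - u))\<^sup>2 - (2 * \<tau> - \<tau>\<^sup>2) * (t\<^sup>2 / n)"
    using n by (simp add: c_def power2_eq_square field_simps)
  also have "\<dots> \<le> (norm (z - u))\<^sup>2 - (1 - \<theta>\<^sup>2) * ((e / 2)\<^sup>2 * S)"
  proof -
    have "1 - \<theta>\<^sup>2 \<le> 2 * \<tau> - \<tau>\<^sup>2"
      using relaxation abs_le_square_iff[of "\<tau> - 1" \<theta>] by (simp add: power2_eq_square algebra_simps)
    moreover have "(e / 2)\<^sup>2 * S \<le> t\<^sup>2 / n"
    proof -
      have "(e / 2)\<^sup>2 * S * n \<le> (e / 2)\<^sup>2 * S * S"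
        using n by (intro mult_left_mono) simp_all
      also have "\<dots> = (e / 2 * S)\<^sup>2" by (simp add: power2_eq_square)
      also have "\<dots> \<le> t\<^sup>2" using t \<open>0 \<le> e\<close> n by (intro power_mono) simp_all
      finally show ?thesis using n by (simp add: pos_le_divide_eq)
    qed
    moreover have "0 \<le> 1 - \<theta>\<^sup>2" using \<open>0 \<le> \<theta>\<close> \<open>\<theta> \<le> 1\<close> by (simp add: power_le_one)
    ultimately have "(1 - \<theta>\<^sup>2) * ((e / 2)\<^sup>2 * S) \<le> (2 * \<tau> - \<tau>\<^sup>2) * (t\<^sup>2 / n)"
      using n by (intro mult_mono) simp_all
    then show ?thesis by linarith
  qed
  finally show ?thesis by (simp add: S_def t_def n_def c_def mult.assoc)
qed

lemma infdist_sufficient_decrease: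
  fixes z z' :: "'a::heine_borel"
  assumes "closed T" "T \<noteq> {}" "c \<le> 1"
    and decrease: "\<And>u. u \<in> T \<Longrightarrow> (dist z' u)\<^sup>2 + c * (infdist z T)\<^sup>2 \<le> (dist z u)\<^sup>2"
  shows "infdist z' T \<le> sqrt (1 - c) * infdist z T"
proof -
  obtain u where u: "u \<in> T" "infdist z T = dist z u"
    using infdist_attains_inf[OF assms(1,2)] by metis
  have "(dist z' u)\<^sup>2 \<le> (1 - c) * (infdist z T)\<^sup>2"
    using decrease[OF u(1)] u(2) by (simp add: algebra_simps)
  then have "dist z' u \<le> sqrt (1 - c) * infdist z T"
    using infdist_nonneg[of z T]
    by (metis abs_of_nonneg real_sqrt_abs real_sqrt_le_mono real_sqrt_mult zero_le_dist)
  then show ?thesis using infdist_le[OF u(1), of z'] by linarith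
qed

lemma error_bound_globalization:
  fixes d D \<alpha> \<beta> \<delta> K :: real
  assumes "0 \<le> d" "d \<le> D" "0 < \<delta>" and local_bound: "\<alpha> \<le> \<delta> \<Longrightarrow> d \<le> \<beta> + K * \<alpha>"
  shows "d\<^sup>2 \<le> (1 + K\<^sup>2 + (D / \<delta>)\<^sup>2) * (\<alpha>\<^sup>2 + \<beta>\<^sup>2)"
proof (cases "\<alpha> \<le> \<delta>")
  case True
  have "d\<^sup>2 \<le> (\<beta> + K * \<alpha>)\<^sup>2" using local_bound[OF True] \<open>0 \<le> d\<close> by (intro power_mono) simp_all
  also have "\<dots> \<le> (1 + K\<^sup>2) * (\<alpha>\<^sup>2 + \<beta>\<^sup>2)"
    using zero_le_power2[of "\<alpha> - K * \<beta>"] by (simp add: power2_eq_square algebra_simps)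
  also have "\<dots> \<le> (1 + K\<^sup>2 + (D / \<delta>)\<^sup>2) * (\<alpha>\<^sup>2 + \<beta>\<^sup>2)" by (intro mult_right_mono) simp_all
  finally show ?thesis .
next
  case False
  have "d\<^sup>2 \<le> D\<^sup>2" using assms by (intro power_mono) simp_all
  also have "\<dots> \<le> (D / \<delta>)\<^sup>2 * \<alpha>\<^sup>2"
  proof -
    have "\<delta>\<^sup>2 \<le> \<alpha>\<^sup>2" using False \<open>0 < \<delta>\<close> by (intro power_mono) simp_all
    then show ?thesis using \<open>0 < \<delta>\<close> by (simp add: field_simps mult_left_mono)
  qed
  also have "\<dots> \<le> (1 + K\<^sup>2 + (D / \<delta>)\<^sup>2) * (\<alpha>\<^sup>2 + \<beta>\<^sup>2)"
    by (intro mult_mono) simp_all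
  finally show ?thesis .
qed

lemma fejer_linear_convergence:
  fixes Z :: "nat \<Rightarrow> 'a::complete_space"
  assumes "closed T" "T \<noteq> {}" "0 \<le> q" "q < 1"
    and fejer: "\<And>k t. t \<in> T \<Longrightarrow> dist (Z (Suc k)) t \<le> dist (Z k) t"
    and decay: "\<And>k. infdist (Z (Suc k)) T \<le> q * infdist (Z k) T"
  shows "\<exists>z\<in>T. \<forall>k. dist (Z k) z \<le> 2 * infdist (Z 0) T * q ^ k"
proof -
  define d where "d = infdist (Z 0) T"
  have "0 \<le> d" by (simp add: d_def infdist_nonneg)
  have infdist_bound: "infdist (Z k) T \<le> d * q ^ k" for k
  proof (induction k)
    case (Suc k)
    have "q * infdist (Z k) T \<le> q * (d * q ^ k)" using Suc.IH \<open>0 \<le> q\<close> by (rule mult_left_mono)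
    then show ?case using decay[of k] by (simp add: mult.left_commute)
  qed (simp add: d_def)
  have tail_bound: "dist (Z (k + m)) (Z k) \<le> 2 * d * q ^ k" for k m
  proof -
    have "dist (Z (k + m)) (Z k) / 2 \<le> dist (Z k) t" if "t \<in> T" for t
    proof -
      have "dist (Z (k + m)) t \<le> dist (Z k) t"
        by (induction m) (use fejer[OF \<open>t \<in> T\<close>] order_trans in auto)
      then show ?thesis using dist_triangle2[of "Z (k + m)" "Z k" t] by linarith
    qed
    then have "dist (Z (k + m)) (Z k) / 2 \<le> infdist (Z k) T"
      unfolding infdist_notempty[OF \<open>T \<noteq> {}\<close>] using \<open>T \<noteq> {}\<close> by (intro cINF_greatest) auto
    then show ?thesis using infdist_bound[of k] by linarith
  qed
  have geometric: "(\<lambda>k. c * q ^ k) \<longlonglongrightarrow> 0" for c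
    using tendsto_mult_right_zero[OF LIMSEQ_power_zero[of q]] \<open>0 \<le> q\<close> \<open>q < 1\<close> by simp
  have "Cauchy Z"
  proof (rule metric_CauchyI)
    fix e :: real
    assume "0 < e"
    then obtain M where M: "4 * d * q ^ M < e"
      using order_tendstoD(2)[OF geometric[of "4 * d"]] by (auto simp: eventually_sequentially)
    have "dist (Z m) (Z n) < e" if "M \<le> m" "M \<le> n" for m n
      using tail_bound[of M "m - M"] tail_bound[of M "n - M"] dist_triangle2[of "Z m" "Z n" "Z M"]
        M that
      by simp
    then show "\<exists>M. \<forall>m\<ge>M. \<forall>n\<ge>M. dist (Z m) (Z n) < e" by blast
  qed
  then obtain z where lim: "Z \<longlonglongrightarrow> z" using Cauchy_convergent_iff convergent_def by blast
  have z_bound: "dist (Z k) z \<le> 2 * d * q ^ k" for k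
  proof -
    have "(\<lambda>m. dist (Z (m + k)) (Z k)) \<longlonglongrightarrow> dist z (Z k)"
      by (intro tendsto_dist tendsto_const LIMSEQ_ignore_initial_segment[OF lim])
    then show ?thesis
      using tail_bound[of k] by (intro LIMSEQ_le_const2) (auto simp: add.commute dist_commute)
  qed
  have "infdist z T \<le> 0"
  proof (rule LIMSEQ_le_const[OF geometric[of "3 * d"]], intro exI allI impI)
    fix k
    show "infdist z T \<le> 3 * d * q ^ k"
      using infdist_triangle[of z T "Z k"] infdist_bound[of k] z_bound[of k]
      by (simp add: dist_commute)
  qed
  then have "z \<in> T"
    using in_closed_iff_infdist_zero[OF \<open>closed T\<close> \<open>T \<noteq> {}\<close>] infdist_nonneg[of z T] by simp
  with z_bound show ?thesis by (auto simp: d_def)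
qed

theorem projective_method_linear_convergence:
  fixes Z a b :: "nat \<Rightarrow> 'a::euclidean_space"
  assumes "closed T" "T \<noteq> {}"
    and separation: "\<And>k u. u \<in> T \<Longrightarrow> inner (a k) (b k) \<le> inner (a k) (Z k - u)"
    and angle: "\<And>k. e * ((norm (a k))\<^sup>2 + (norm (b k))\<^sup>2) \<le> 2 * inner (a k) (b k)" "0 < e"
    and b_nonzero: "\<And>k. b k \<noteq> 0"
    and relaxation: "\<And>k. \<bar>\<tau> k - 1\<bar> \<le> \<theta>" "\<theta> < 1"
    and step: "\<And>k. Z (Suc k) = Z k - (\<tau> k * (inner (a k) (b k) / (norm (a k))\<^sup>2)) *\<^sub>R a k"
    and local_error_bound: "0 < \<delta>"
      "\<And>k. norm (a k) \<le> \<delta> \<Longrightarrow> infdist (Z k) T \<le> norm (b k) + K * norm (a k)"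
  shows "\<exists>z\<in>T. \<exists>c q. 0 \<le> c \<and> 0 \<le> q \<and> q < 1 \<and> (\<forall>k. dist (Z k) z \<le> c * q ^ k)"
proof -
  define S where "S k = (norm (a k))\<^sup>2 + (norm (b k))\<^sup>2" for k
  define \<kappa> where "\<kappa> = (1 - \<theta>\<^sup>2) * (e / 2)\<^sup>2"
  have "0 \<le> \<theta>" using relaxation(1)[of 0] by linarith
  then have "0 < \<kappa>" using relaxation(2) \<open>0 < e\<close> by (simp add: \<kappa>_def power_less_one_iff)
  have "0 \<le> S k" for k by (simp add: S_def)
  have "a k \<noteq> 0" for k
  proof
    assume "a k = 0"
    then have "e * (norm (b k))\<^sup>2 \<le> 0" using angle(1)[of k] by simp
    then show False using b_nonzero[of k] \<open>0 < e\<close> by (simp add: mult_le_0_iff)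
  qed
  have decrease: "(dist (Z (Suc k)) u)\<^sup>2 + \<kappa> * S k \<le> (dist (Z k) u)\<^sup>2" if "u \<in> T" for k u
  proof -
    have "(norm (Z (Suc k) - u))\<^sup>2 \<le> (norm (Z k - u))\<^sup>2 - \<kappa> * S k"
      unfolding step \<kappa>_def S_def
      by (rule relaxed_projection_step[OF separation[OF that] angle(1) _ \<open>a k \<noteq> 0\<close> relaxation(1)])
        (use \<open>0 < e\<close> relaxation(2) in simp_all)
    then show ?thesis by (simp add: dist_norm)
  qed
  have fejer_squared: "(dist (Z (Suc k)) u)\<^sup>2 \<le> (dist (Z k) u)\<^sup>2" if "u \<in> T" for k u
    using decrease[OF that, of k] mult_nonneg_nonneg[OF less_imp_le[OF \<open>0 < \<kappa>\<close>] \<open>0 \<le> S k\<close>]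
    by linarith
  have fejer: "dist (Z (Suc k)) u \<le> dist (Z k) u" if "u \<in> T" for k u
    using power2_le_imp_le[OF fejer_squared[OF that]] by simp
  define D where "D = infdist (Z 0) T"
  have "infdist (Z (Suc k)) T \<le> infdist (Z k) T" for k
    using infdist_sufficient_decrease[OF \<open>closed T\<close> \<open>T \<noteq> {}\<close>, of 0 "Z (Suc k)" "Z k"] fejer by simp
  then have "infdist (Z k) T \<le> D" for k
    unfolding D_def by (rule lift_Suc_antimono_le[of "\<lambda>k. infdist (Z k) T"]) simp
  define M where "M = 1 + K\<^sup>2 + (D / \<delta>)\<^sup>2"
  have "0 < M" by (simp add: M_def add_pos_nonneg)
  have error_bound: "(infdist (Z k) T)\<^sup>2 \<le> M * S k" for k
    unfolding M_def S_def
    by (intro error_bound_globalization infdist_nonneg \<open>infdist (Z k) T \<le> D\<close> local_error_bound)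
  define c where "c = min (\<kappa> / M) 1"
  have c: "0 < c" "c \<le> 1" using \<open>0 < \<kappa>\<close> \<open>0 < M\<close> by (simp_all add: c_def)
  have sufficient_decrease: "c * (infdist (Z k) T)\<^sup>2 \<le> \<kappa> * S k" for k
  proof -
    have "c * (infdist (Z k) T)\<^sup>2 \<le> \<kappa> / M * (M * S k)"
      using error_bound[of k] \<open>0 < \<kappa>\<close> \<open>0 < M\<close> by (intro mult_mono) (simp_all add: c_def)
    then show ?thesis using \<open>0 < M\<close> by simp
  qed
  have contraction: "infdist (Z (Suc k)) T \<le> sqrt (1 - c) * infdist (Z k) T" for k
  proof (rule infdist_sufficient_decrease[OF \<open>closed T\<close> \<open>T \<noteq> {}\<close> c(2)])
    fix u
    assume "u \<in> T"
    show "(dist (Z (Suc k)) u)\<^sup>2 + c * (infdist (Z k) T)\<^sup>2 \<le> (dist (Z k) u)\<^sup>2"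
      using decrease[OF \<open>u \<in> T\<close>, of k] sufficient_decrease[of k] by linarith
  qed
  have q: "0 \<le> sqrt (1 - c)" "sqrt (1 - c) < 1" using c by simp_all
  obtain z where "z \<in> T" "\<forall>k. dist (Z k) z \<le> 2 * D * sqrt (1 - c) ^ k"
    using fejer_linear_convergence[where Z = Z, OF \<open>closed T\<close> \<open>T \<noteq> {}\<close> q fejer contraction]
    unfolding D_def by blast
  moreover have "0 \<le> 2 * D" by (simp add: D_def infdist_nonneg)
  ultimately show ?thesis using q by blast
qed

section \<open>The scenario space as a Euclidean space\<close>

definition embL :: "('s::finite \<Rightarrow> real) \<Rightarrow> ('s \<Rightarrow> real^'i::finite) \<Rightarrow> real^('s \<times> 'i)" where
  "embL p x = (\<chi> j. sqrt (p (fst j)) * x (fst j) $ snd j)"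

lemma embL_add [simp]: "embL p (\<lambda>s. x s + y s) = embL p x + embL p y"
  by (simp add: embL_def vec_eq_iff algebra_simps)

lemma embL_diff [simp]: "embL p (\<lambda>s. x s - y s) = embL p x - embL p y"
  by (simp add: embL_def vec_eq_iff algebra_simps)

lemma embL_scaleR [simp]: "embL p (\<lambda>s. c *\<^sub>R x s) = c *\<^sub>R embL p x"
  by (simp add: embL_def vec_eq_iff algebra_simps)

lemma embL_uminus [simp]: "embL p (\<lambda>s. - x s) = - embL p x"
  by (simp add: embL_def vec_eq_iff)

lemma embL_zero [simp]: "embL p (\<lambda>s. 0) = 0"
  by (simp add: embL_def vec_eq_iff)

lemma ipL_embL:
  assumes "\<And>s. 0 \<le> p s"
  shows "ipL p x y = inner (embL p x) (embL p y)"
proof -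
  have "inner (embL p x) (embL p y) = (\<Sum>(s, i)\<in>UNIV \<times> UNIV. p s * (x s $ i * y s $ i))"
    unfolding inner_vec_def embL_def UNIV_Times_UNIV
    by (intro sum.cong) (auto simp: assms real_sqrt_mult[symmetric])
  also have "\<dots> = ipL p x y"
    by (simp add: ipL_def inner_vec_def sum_distrib_left sum.cartesian_product)
  finally show ?thesis ..
qed

lemma normL_embL:
  assumes "\<And>s. 0 \<le> p s"
  shows "normL p x = norm (embL p x)"
  by (simp add: normL_def ipL_embL[OF assms] norm_eq_sqrt_inner)

lemma inj_embL:
  fixes p :: "'s::finite \<Rightarrow> real"
  assumes "\<And>s. p s \<noteq> 0"
  shows "inj (embL p)"
proof (rule injI)
  fix x y :: "'s \<Rightarrow> real^'i::finite"
  assume "embL p x = embL p y"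
  then have "sqrt (p s) * x s $ i = sqrt (p s) * y s $ i" for s i
    by (auto simp: embL_def vec_eq_iff)
  then show "x = y" using assms by (simp add: fun_eq_iff vec_eq_iff)
qed

lemma surj_embL:
  fixes p :: "'s::finite \<Rightarrow> real"
  assumes "\<And>s. p s \<noteq> 0"
  shows "surj (embL p)"
proof (rule surjI)
  fix v :: "real^('s \<times> 'i::finite)"
  show "embL p (\<lambda>s. \<chi> i. v $ (s, i) / sqrt (p s)) = v"
    using assms by (simp add: embL_def vec_eq_iff)
qed

(* Elements of L_n are plain functions, which carry no vector space instance. *)
definition subspaceL :: "('s \<Rightarrow> 'a::real_vector) set \<Rightarrow> bool" where
  "subspaceL V \<longleftrightarrow> (\<lambda>s. 0) \<in> V \<and> (\<forall>x\<in>V. \<forall>y\<in>V. (\<lambda>s. x s + y s) \<in> V)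
     \<and> (\<forall>c. \<forall>x\<in>V. (\<lambda>s. c *\<^sub>R x s) \<in> V)"

lemma subspaceL_zero: "subspaceL V \<Longrightarrow> (\<lambda>s. 0) \<in> V"
  by (simp add: subspaceL_def)

lemma subspaceL_add: "subspaceL V \<Longrightarrow> x \<in> V \<Longrightarrow> y \<in> V \<Longrightarrow> (\<lambda>s. x s + y s) \<in> V"
  by (simp add: subspaceL_def)

lemma subspaceL_scaleR: "subspaceL V \<Longrightarrow> x \<in> V \<Longrightarrow> (\<lambda>s. c *\<^sub>R x s) \<in> V"
  by (simp add: subspaceL_def)

lemma subspaceL_uminus: "subspaceL V \<Longrightarrow> x \<in> V \<Longrightarrow> (\<lambda>s. - x s) \<in> V"
  using subspaceL_scaleR[of V x "-1"] by simp

lemma subspaceL_diff: "subspaceL V \<Longrightarrow> x \<in> V \<Longrightarrow> y \<in> V \<Longrightarrow> (\<lambda>s. x s - y s) \<in> V"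
  using subspaceL_add[OF _ _ subspaceL_uminus, of V x y] by simp

lemma subspaceL_NNset: "subspaceL (NNset sc stg)"
  unfolding subspaceL_def
proof (intro conjI ballI allI)
  show "(\<lambda>s. 0) \<in> NNset sc stg" by (simp add: NNset_def)
next
  fix x y
  assume "x \<in> NNset sc stg" "y \<in> NNset sc stg"
  then show "(\<lambda>s. x s + y s) \<in> NNset sc stg"
    unfolding NNset_def mem_Collect_eq by (metis vector_add_component)
next
  fix c x
  assume "x \<in> NNset sc stg"
  then show "(\<lambda>s. c *\<^sub>R x s) \<in> NNset sc stg"
    unfolding NNset_def mem_Collect_eq by (metis vector_scaleR_component)
qed

lemma ipL_add_right: "ipL p x (\<lambda>s. y s + z s) = ipL p x y + ipL p x z"
  by (simp add: ipL_def inner_add_right distrib_left sum.distrib)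

lemma ipL_scaleR_right: "ipL p x (\<lambda>s. c *\<^sub>R y s) = c * ipL p x y"
  by (simp add: ipL_def sum_distrib_left mult.left_commute)

lemma subspaceL_MMset: "subspaceL (MMset p V)"
  by (simp add: subspaceL_def MMset_def ipL_add_right ipL_scaleR_right) (simp add: ipL_def)

lemma subspace_embL_image:
  assumes "subspaceL V"
  shows "subspace (embL p ` V)"
  unfolding subspace_def
proof (intro conjI ballI allI)
  show "0 \<in> embL p ` V"
    by (rule image_eqI[where x = "\<lambda>s. 0"]) (simp_all add: subspaceL_zero[OF assms])
next
  fix u v
  assume "u \<in> embL p ` V" "v \<in> embL p ` V"
  then obtain x y where "x \<in> V" "y \<in> V" and uv: "u = embL p x" "v = embL p y" by blast
  show "u + v \<in> embL p ` V"
    unfolding uv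
    by (rule image_eqI[where x = "\<lambda>s. x s + y s"])
      (simp_all add: subspaceL_add assms \<open>x \<in> V\<close> \<open>y \<in> V\<close>)
next
  fix c u
  assume "u \<in> embL p ` V"
  then obtain x where "x \<in> V" and u: "u = embL p x" by blast
  show "c *\<^sub>R u \<in> embL p ` V"
    unfolding u
    by (rule image_eqI[where x = "\<lambda>s. c *\<^sub>R x s"]) (simp_all add: subspaceL_scaleR assms \<open>x \<in> V\<close>)
qed

(* Exchanging the M-components of the factors: the identity behind Spingarn's partial inverse. *)
lemma inner_add_swap_orthogonal:
  fixes n1 n2 m1 m2 :: "'a::real_inner"
  assumes "inner n1 m1 = 0" "inner n1 m2 = 0" "inner n2 m1 = 0" "inner n2 m2 = 0"
  shows "inner (n1 + m1) (n2 + m2) = inner (n1 + m2) (n2 + m1)"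
  using assms by (simp add: inner_add_left inner_add_right inner_commute)

locale scenario_space =
  fixes p :: "'s::finite \<Rightarrow> real" and sc :: "'s \<Rightarrow> nat \<Rightarrow> 'c" and stg :: "'i::finite \<Rightarrow> nat"
  assumes p_pos: "\<And>s. 0 < p s"
begin

abbreviation NN :: "('s \<Rightarrow> real^'i) set" where "NN \<equiv> NNset sc stg"
abbreviation MM :: "('s \<Rightarrow> real^'i) set" where "MM \<equiv> MMset p NN"
abbreviation projN :: "('s \<Rightarrow> real^'i) \<Rightarrow> 's \<Rightarrow> real^'i" where "projN \<equiv> PN p sc stg"
abbreviation projM :: "('s \<Rightarrow> real^'i) \<Rightarrow> 's \<Rightarrow> real^'i" where "projM \<equiv> PM p sc stg"

lemma ipL_eq_inner: "ipL p x y = inner (embL p x) (embL p y)"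
  using p_pos by (intro ipL_embL less_imp_le)

lemma normL_eq_norm: "normL p x = norm (embL p x)"
  using p_pos by (intro normL_embL less_imp_le)

lemma embL_eq_iff: "embL p x = embL p y \<longleftrightarrow> x = y"
  using inj_embL[of p] p_pos by (metis injD less_irrefl)

lemma closed_embL_image:
  assumes "closedL p S"
  shows "closed (embL p ` S)"
proof (rule closed_sequential_limits[THEN iffD2], intro allI impI, elim conjE)
  fix f l
  assume f: "\<forall>n. f n \<in> embL p ` S" and lim: "f \<longlonglongrightarrow> l"
  from f have "\<forall>n. \<exists>x. x \<in> S \<and> f n = embL p x" by blast
  then obtain g where g: "\<And>n. g n \<in> S" "\<And>n. f n = embL p (g n)" by metis
  obtain u where u: "l = embL p u" using surj_embL[of p] p_pos by (metis less_irrefl surjD)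
  have "(\<lambda>n. normL p (\<lambda>s. g n s - u s)) \<longlonglongrightarrow> 0"
    using lim unfolding normL_eq_norm embL_diff g(2)[symmetric] u
    by (simp add: LIM_zero_iff tendsto_norm_zero)
  then have "u \<in> S" using assms g(1) unfolding closedL_def by blast
  then show "l \<in> embL p ` S" using u by blast
qed

lemma projL_eqI:
  assumes "subspaceL V" "y \<in> V" and orth: "\<And>z. z \<in> V \<Longrightarrow> ipL p (\<lambda>s. x s - y s) z = 0"
  shows "projL p V x = y"
  unfolding projL_def
proof (rule the1_equality)
  show "\<exists>!y. y \<in> V \<and> (\<forall>z\<in>V. ipL p (\<lambda>s. x s - y s) z = 0)"
  proof (rule ex1I[of _ y])
    fix y'
    assume y': "y' \<in> V \<and> (\<forall>z\<in>V. ipL p (\<lambda>s. x s - y' s) z = 0)"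
    have d: "(\<lambda>s. y' s - y s) \<in> V" using subspaceL_diff[OF assms(1)] y' assms(2) by blast
    have "inner (embL p x - embL p y) (embL p y' - embL p y) = 0"
      using orth[OF d] by (simp add: ipL_eq_inner)
    moreover have "ipL p (\<lambda>s. x s - y' s) (\<lambda>s. y' s - y s) = 0" using y' d by blast
    then have "inner (embL p x - embL p y') (embL p y' - embL p y) = 0"
      by (simp add: ipL_eq_inner)
    ultimately have "inner (embL p y' - embL p y) (embL p y' - embL p y) = 0"
      by (simp add: inner_diff_left inner_diff_right)
    then show "y' = y" by (simp add: embL_eq_iff)
  qed (use assms in blast)
qed (use assms in blast)

lemma NN_MM_decomposition: "\<exists>n\<in>NN. \<exists>m\<in>MM. x = (\<lambda>s. n s + m s)"
proof -
  let ?S = "embL p ` NN"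
  obtain y z where y: "y \<in> span ?S" and z: "\<And>v. v \<in> span ?S \<Longrightarrow> orthogonal z v"
    and yz: "embL p x = y + z"
    using orthogonal_subspace_decomp_exists[of ?S "embL p x"] by blast
  have "y \<in> ?S" using y by (metis span_eq_iff subspace_embL_image subspaceL_NNset)
  then obtain n where n: "n \<in> NN" "y = embL p n" by blast
  define m where "m = (\<lambda>s. x s - n s)"
  have "m \<in> MM"
    unfolding MMset_def
  proof (intro CollectI ballI)
    fix v
    assume "v \<in> NN"
    then have "orthogonal z (embL p v)" by (intro z span_base imageI)
    moreover have "embL p m = z" using yz n by (simp add: m_def)
    ultimately show "ipL p v m = 0" by (simp add: ipL_eq_inner orthogonal_def inner_commute)
  qed
  moreover have "x = (\<lambda>s. n s + m s)" by (simp add: m_def)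
  ultimately show ?thesis using n by blast
qed

lemma
  assumes "n \<in> NN" "m \<in> MM"
  shows projN_add: "projN (\<lambda>s. n s + m s) = n"
    and projM_add: "projM (\<lambda>s. n s + m s) = m"
proof -
  show "projN (\<lambda>s. n s + m s) = n"
    unfolding PN_def using assms
    by (intro projL_eqI subspaceL_NNset) (auto simp: MMset_def ipL_eq_inner inner_commute)
  show "projM (\<lambda>s. n s + m s) = m"
    unfolding PM_def using assms
    by (intro projL_eqI subspaceL_MMset) (auto simp: MMset_def)
qed

lemma
  shows projN_in_NN: "projN x \<in> NN"
    and projM_in_MM: "projM x \<in> MM"
    and proj_decomposition: "(\<lambda>s. projN x s + projM x s) = x"
proof -
  obtain n m where "n \<in> NN" "m \<in> MM" and x: "x = (\<lambda>s. n s + m s)"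
    using NN_MM_decomposition by blast
  then show "projN x \<in> NN" "projM x \<in> MM" "(\<lambda>s. projN x s + projM x s) = x"
    by (simp_all add: projN_add projM_add)
qed

lemma proj_decomposition_at: "projN x s + projM x s = x s"
  using proj_decomposition[of x] by (metis (no_types))

lemma embL_proj_decomposition: "embL p x = embL p (projN x) + embL p (projM x)"
  by (metis embL_add proj_decomposition)

lemma
  shows projN_zero: "projN (\<lambda>s. 0) = (\<lambda>s. 0)"
    and projM_zero: "projM (\<lambda>s. 0) = (\<lambda>s. 0)"
  using projN_add[of "\<lambda>s. 0" "\<lambda>s. 0"] projM_add[of "\<lambda>s. 0" "\<lambda>s. 0"]
  by (simp_all add: subspaceL_zero subspaceL_NNset subspaceL_MMset)

lemma
  shows projN_opA: "projN (opA p sc stg r u) = projN u"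
    and projM_opA: "projM (opA p sc stg r u) = (\<lambda>s. r *\<^sub>R projM u s)"
  unfolding opA_def
  by (intro projN_add projM_add projN_in_NN subspaceL_scaleR[OF subspaceL_MMset] projM_in_MM)+

lemma inner_embL_NN_MM: "n \<in> NN \<Longrightarrow> m \<in> MM \<Longrightarrow> inner (embL p n) (embL p m) = 0"
  by (simp add: MMset_def ipL_eq_inner[symmetric])

lemma ipL_swap_NN_MM:
  assumes "n1 \<in> NN" "n2 \<in> NN" "m1 \<in> MM" "m2 \<in> MM"
  shows "ipL p (\<lambda>s. n1 s + m1 s) (\<lambda>s. n2 s + m2 s) = ipL p (\<lambda>s. n1 s + m2 s) (\<lambda>s. n2 s + m1 s)"
  unfolding ipL_eq_inner embL_add
  by (intro inner_add_swap_orthogonal inner_embL_NN_MM assms)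

lemma normL_add_NN_MM:
  assumes "n \<in> NN" "m \<in> MM"
  shows "(normL p (\<lambda>s. n s + m s))\<^sup>2 = (normL p n)\<^sup>2 + (normL p m)\<^sup>2"
  unfolding normL_eq_norm embL_add
  by (intro norm_add_Pythagorean) (simp add: orthogonal_def inner_embL_NN_MM assms)

lemma normal_coneL_CalC_iff:
  "v \<in> normal_coneL p (CalC C) u \<longleftrightarrow> (\<forall>s. v s \<in> normal_cone (C s) (u s))"
proof
  assume v: "v \<in> normal_coneL p (CalC C) u"
  then have u: "u \<in> CalC C" and nc: "\<And>y. y \<in> CalC C \<Longrightarrow> ipL p v (\<lambda>s. y s - u s) \<le> 0"
    by (auto simp: normal_coneL_def split: if_splits)
  show "\<forall>s. v s \<in> normal_cone (C s) (u s)"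
  proof
    fix s
    have "inner (v s) (y - u s) \<le> 0" if "y \<in> C s" for y
    proof -
      have "u(s := y) \<in> CalC C" using u that by (simp add: CalC_def)
      moreover have "ipL p v (\<lambda>t. (u(s := y)) t - u t) = p s * inner (v s) (y - u s)"
        unfolding ipL_def by (subst sum.remove[of _ s]) auto
      ultimately show ?thesis using nc p_pos[of s] by (fastforce simp: mult_le_0_iff)
    qed
    then show "v s \<in> normal_cone (C s) (u s)" using u by (simp add: normal_cone_def CalC_def)
  qed
next
  assume nc: "\<forall>s. v s \<in> normal_cone (C s) (u s)"
  then have u: "u \<in> CalC C" by (auto simp: CalC_def normal_cone_def split: if_splits)
  have "ipL p v (\<lambda>s. y s - u s) \<le> 0" if "y \<in> CalC C" for y
    unfolding ipL_def
  proof (rule sum_nonpos)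
    fix s
    have "inner (v s) (y s - u s) \<le> 0"
      using nc that u by (auto simp: normal_cone_def CalC_def)
    then show "p s * inner (v s) (y s - u s) \<le> 0" using p_pos[of s] by (simp add: mult_le_0_iff)
  qed
  then show "v \<in> normal_coneL p (CalC C) u" using u by (simp add: normal_coneL_def)
qed

lemma FNC_iff: "y \<in> FNC p F C u \<longleftrightarrow> (\<forall>s. y s - F (u s) s \<in> normal_cone (C s) (u s))"
proof
  assume "y \<in> FNC p F C u"
  then obtain v where "v \<in> normal_coneL p (CalC C) u" "y = (\<lambda>s. F (u s) s + v s)"
    unfolding FNC_def by blast
  then show "\<forall>s. y s - F (u s) s \<in> normal_cone (C s) (u s)" by (simp add: normal_coneL_CalC_iff)
next
  assume "\<forall>s. y s - F (u s) s \<in> normal_cone (C s) (u s)"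
  then have "(\<lambda>s. y s - F (u s) s) \<in> normal_coneL p (CalC C) u" by (simp add: normal_coneL_CalC_iff)
  then show "y \<in> FNC p F C u" unfolding FNC_def by force
qed

lemma normL_split_NN_MM:
  assumes "x \<in> NN" "w \<in> MM"
  shows "(normL p (\<lambda>s. x s - c *\<^sub>R w s))\<^sup>2 = (normL p x)\<^sup>2 + c\<^sup>2 * (normL p w)\<^sup>2"
proof -
  have "(\<lambda>s. - (c *\<^sub>R w s)) \<in> MM"
    by (intro subspaceL_uminus subspaceL_scaleR subspaceL_MMset assms)
  from normL_add_NN_MM[OF assms(1) this] show ?thesis
    by (simp add: normL_eq_norm power_mult_distrib)
qed

end

section \<open>The partial-inverse reformulation\<close>

lemma normal_cone_monotone:
  assumes F_mono: "\<And>y z. 0 \<le> inner (f y - f z) (y - z)"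
    and "a - f y \<in> normal_cone K y" "b - f z \<in> normal_cone K z"
  shows "0 \<le> inner (a - b) (y - z)"
proof -
  have "y \<in> K" "z \<in> K" using assms(2,3) by (auto simp: normal_cone_def split: if_splits)
  then have "inner (a - f y) (z - y) \<le> 0" "inner (b - f z) (y - z) \<le> 0"
    using assms(2,3) by (auto simp: normal_cone_def)
  moreover have "inner (a - b) (y - z)
      = inner (f y - f z) (y - z) - inner (a - f y) (z - y) - inner (b - f z) (y - z)"
    by (simp add: inner_diff_left inner_diff_right inner_commute)
  ultimately show ?thesis using F_mono[of y z] by linarith
qed

locale svi_setting = scenario_space p sc stg
  for p :: "'s::finite \<Rightarrow> real" and sc :: "'s \<Rightarrow> nat \<Rightarrow> 'c" and stg :: "'i::finite \<Rightarrow> nat" +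
  fixes F :: "real^'i \<Rightarrow> 's \<Rightarrow> real^'i" and C :: "'s \<Rightarrow> (real^'i) set" and r :: real
  assumes F_mono: "\<And>s y z. inner (F y s - F z s) (y - z) \<ge> 0"
    and r_pos: "0 < r"
begin

abbreviation Sinv0 :: "('s \<Rightarrow> real^'i) set" where "Sinv0 \<equiv> Sinv p sc stg F C r (\<lambda>s. 0)"

lemma Sinv0_iff:
  "u \<in> Sinv0 \<longleftrightarrow> (\<forall>s. r *\<^sub>R projM u s - F (projN u s) s \<in> normal_cone (C s) (projN u s))"
proof
  assume "u \<in> Sinv0"
  then obtain z where z: "z \<in> opT p sc stg F C (opA p sc stg r u)"
    and Az: "opA p sc stg r z = (\<lambda>s. 0)"
    unfolding Sinv_def by force
  have "projN z = (\<lambda>s. 0)" using projN_opA[of r z] Az projN_zero by metis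
  moreover have "(\<lambda>s. r *\<^sub>R projM z s) = (\<lambda>s. 0)" using projM_opA[of r z] Az projM_zero by metis
  then have "projM z = (\<lambda>s. 0)" using r_pos by (auto simp: fun_eq_iff)
  ultimately have "(\<lambda>s. r *\<^sub>R projM u s) \<in> FNC p F C (projN u)"
    using z by (simp add: opT_def projN_opA projM_opA)
  then show "\<forall>s. r *\<^sub>R projM u s - F (projN u s) s \<in> normal_cone (C s) (projN u s)"
    by (simp add: FNC_iff)
next
  assume "\<forall>s. r *\<^sub>R projM u s - F (projN u s) s \<in> normal_cone (C s) (projN u s)"
  then have "(\<lambda>s. 0) \<in> opT p sc stg F C (opA p sc stg r u)"
    by (simp add: opT_def projN_opA projM_opA projN_zero projM_zero FNC_iff)
  moreover have "opA p sc stg r (\<lambda>s. 0) = (\<lambda>s. 0)" by (simp add: opA_def projN_zero projM_zero)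
  ultimately show "u \<in> Sinv0" unfolding Sinv_def by force
qed

lemma svi_solution_in_Sinv0:
  assumes "svi_solution p sc stg F C xs ws"
  shows "(\<lambda>s. xs s - (1 / r) *\<^sub>R ws s) \<in> Sinv0"
proof -
  have xs: "xs \<in> NN" and ws: "ws \<in> MM"
    and nc: "\<And>s. - F (xs s) s - ws s \<in> normal_cone (C s) (xs s)"
    using assms by (simp_all add: svi_solution_def)
  have m: "(\<lambda>s. - ((1 / r) *\<^sub>R ws s)) \<in> MM"
    by (intro subspaceL_uminus subspaceL_scaleR subspaceL_MMset ws)
  have u: "(\<lambda>s. xs s - (1 / r) *\<^sub>R ws s) = (\<lambda>s. xs s + - ((1 / r) *\<^sub>R ws s))" by simp
  have eq: "r *\<^sub>R - ((1 / r) *\<^sub>R ws s) - F (xs s) s = - F (xs s) s - ws s" for s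
    using r_pos by simp
  show ?thesis
    unfolding Sinv0_iff u projN_add[OF xs m] projM_add[OF xs m] eq using nc by blast
qed

lemma solution_of_Sinv0:
  assumes "u \<in> Sinv0"
  shows "\<exists>xs ws. svi_solution p sc stg F C xs ws \<and>
           (\<forall>x\<in>NN. \<forall>w\<in>MM. sqrt ((normL p (\<lambda>s. x s - xs s))\<^sup>2 + (normL p (\<lambda>s. w s - ws s))\<^sup>2 / r\<^sup>2)
                          = normL p (\<lambda>s. x s - (1 / r) *\<^sub>R w s - u s))"
proof (intro exI conjI ballI)
  show "svi_solution p sc stg F C (projN u) (\<lambda>s. - (r *\<^sub>R projM u s))"
    using assms by (simp add: svi_solution_def Sinv0_iff projN_in_NN projM_in_MM
        subspaceL_uminus subspaceL_scaleR subspaceL_MMset)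
  fix x w
  assume "x \<in> NN" "w \<in> MM"
  define n where "n = (\<lambda>s. x s - projN u s)"
  define m where "m = (\<lambda>s. w s - - (r *\<^sub>R projM u s))"
  have "n \<in> NN" "m \<in> MM"
    unfolding n_def m_def
    by (intro subspaceL_diff subspaceL_uminus subspaceL_scaleR subspaceL_NNset subspaceL_MMset
        projN_in_NN projM_in_MM \<open>x \<in> NN\<close> \<open>w \<in> MM\<close>)+
  have "(\<lambda>s. x s - (1 / r) *\<^sub>R w s - u s) = (\<lambda>s. n s - (1 / r) *\<^sub>R m s)"
    unfolding n_def m_def using r_pos proj_decomposition_at[of u]
    by (simp add: fun_eq_iff algebra_simps)
  then have squared:
    "(normL p (\<lambda>s. x s - (1 / r) *\<^sub>R w s - u s))\<^sup>2 = (normL p n)\<^sup>2 + (normL p m)\<^sup>2 / r\<^sup>2"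
    using normL_split_NN_MM[OF \<open>n \<in> NN\<close> \<open>m \<in> MM\<close>] by (simp add: power_divide)
  show "sqrt ((normL p (\<lambda>s. x s - projN u s))\<^sup>2 + (normL p (\<lambda>s. w s - - (r *\<^sub>R projM u s)))\<^sup>2 / r\<^sup>2)
      = normL p (\<lambda>s. x s - (1 / r) *\<^sub>R w s - u s)"
    using real_sqrt_unique[OF squared] by (simp add: n_def m_def normL_eq_norm)
qed

lemma subproblem_in_Sinv:
  assumes "x \<in> NN" "w \<in> MM"
    and subproblem: "\<And>s. r *\<^sub>R (x s - xh s) - w s - F (wh s) s \<in> normal_cone (C s) (wh s)"
  shows "(\<lambda>s. projN wh s - projM xh s - (1 / r) *\<^sub>R w s)
           \<in> Sinv p sc stg F C r (\<lambda>s. r *\<^sub>R ipha_a p sc stg x xh wh s)"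
proof -
  define u where "u = (\<lambda>s. projN wh s - projM xh s - (1 / r) *\<^sub>R w s)"
  define z where "z = (\<lambda>s. r *\<^sub>R (x s - projN xh s) + projM wh s)"
  have "(\<lambda>s. - projM xh s - (1 / r) *\<^sub>R w s) \<in> MM"
    by (intro subspaceL_diff subspaceL_uminus subspaceL_scaleR subspaceL_MMset projM_in_MM \<open>w \<in> MM\<close>)
  from projN_add[OF projN_in_NN this] projM_add[OF projN_in_NN this]
  have proj_u: "projN u = projN wh" "projM u = (\<lambda>s. - projM xh s - (1 / r) *\<^sub>R w s)"
    by (simp_all add: u_def algebra_simps)
  have "(\<lambda>s. r *\<^sub>R (x s - projN xh s)) \<in> NN"
    by (intro subspaceL_scaleR subspaceL_diff subspaceL_NNset projN_in_NN \<open>x \<in> NN\<close>)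
  from projN_add[OF this projM_in_MM] projM_add[OF this projM_in_MM]
  have proj_z: "projN z = (\<lambda>s. r *\<^sub>R (x s - projN xh s))" "projM z = projM wh"
    by (simp_all add: z_def)
  have "r *\<^sub>R (x s - projN xh s) + r *\<^sub>R (- projM xh s - (1 / r) *\<^sub>R w s) - F (wh s) s
      = r *\<^sub>R (x s - xh s) - w s - F (wh s) s" for s
  proof -
    have "r *\<^sub>R xh s = r *\<^sub>R projN xh s + r *\<^sub>R projM xh s"
      by (metis proj_decomposition_at scaleR_add_right)
    then show ?thesis using r_pos by (simp add: algebra_simps)
  qed
  then have "z \<in> opT p sc stg F C (opA p sc stg r u)"
    using subproblem
    by (simp add: opT_def projN_opA projM_opA proj_u proj_z proj_decomposition
        proj_decomposition_at FNC_iff)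
  moreover have "opA p sc stg r z = (\<lambda>s. r *\<^sub>R ipha_a p sc stg x xh wh s)"
    by (simp add: opA_def ipha_a_def proj_z algebra_simps)
  ultimately show ?thesis unfolding Sinv_def u_def[symmetric] by force
qed

lemma subproblem_halfspace_contains_Sinv0:
  assumes "x \<in> NN" "w \<in> MM"
    and subproblem: "\<And>s. r *\<^sub>R (x s - xh s) - w s - F (wh s) s \<in> normal_cone (C s) (wh s)"
    and "u \<in> Sinv0"
  shows "ipL p (ipha_a p sc stg x xh wh) (ipha_b p sc stg x xh wh)
           \<le> ipL p (ipha_a p sc stg x xh wh) (\<lambda>s. x s - (1 / r) *\<^sub>R w s - u s)"
proof -
  define g where "g = (\<lambda>s. r *\<^sub>R (x s - xh s) - w s - r *\<^sub>R projM u s)"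
  define h where "h = (\<lambda>s. wh s - projN u s)"
  have monotone: "0 \<le> ipL p g h"
    unfolding ipL_def
  proof (rule sum_nonneg)
    fix s
    have "0 \<le> inner (g s) (h s)"
      unfolding g_def h_def
      by (rule normal_cone_monotone[where f = "\<lambda>y. F y s" and K = "C s"])
        (use F_mono subproblem \<open>u \<in> Sinv0\<close> in \<open>simp_all add: Sinv0_iff\<close>)
    then show "0 \<le> p s * inner (g s) (h s)" using p_pos[of s] by simp
  qed
  define n1 where "n1 = (\<lambda>s. x s - projN xh s)"
  define m1 where "m1 = projM wh"
  define n2 where "n2 = (\<lambda>s. projN wh s - projN u s)"
  define m2 where "m2 = (\<lambda>s. - projM xh s - (1 / r) *\<^sub>R w s - projM u s)"
  have "n1 \<in> NN" "n2 \<in> NN" "m1 \<in> MM" "m2 \<in> MM"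
    unfolding n1_def n2_def m1_def m2_def
    by (intro subspaceL_diff subspaceL_uminus subspaceL_scaleR subspaceL_NNset subspaceL_MMset
        projN_in_NN projM_in_MM \<open>x \<in> NN\<close> \<open>w \<in> MM\<close>)+
  have a: "ipha_a p sc stg x xh wh = (\<lambda>s. n1 s + m1 s)"
    by (simp add: ipha_a_def n1_def m1_def)
  have b: "embL p (\<lambda>s. x s - (1 / r) *\<^sub>R w s - u s) - embL p (ipha_b p sc stg x xh wh)
      = embL p (\<lambda>s. n2 s + m2 s)"
    using embL_proj_decomposition[of u] by (simp add: ipha_b_def n2_def m2_def algebra_simps)
  have g: "(\<lambda>s. n1 s + m2 s) = (\<lambda>s. (1 / r) *\<^sub>R g s)"
    using r_pos by (simp add: fun_eq_iff g_def n1_def m2_def proj_decomposition_at[of xh, symmetric]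
        algebra_simps)
  have h: "(\<lambda>s. n2 s + m1 s) = h"
    by (simp add: fun_eq_iff h_def n2_def m1_def proj_decomposition_at[of wh, symmetric])
  have "ipL p (ipha_a p sc stg x xh wh) (\<lambda>s. x s - (1 / r) *\<^sub>R w s - u s)
        - ipL p (ipha_a p sc stg x xh wh) (ipha_b p sc stg x xh wh)
      = ipL p (\<lambda>s. n1 s + m1 s) (\<lambda>s. n2 s + m2 s)"
    unfolding ipL_eq_inner inner_diff_right[symmetric] b a ..
  also have "\<dots> = ipL p (\<lambda>s. n1 s + m2 s) (\<lambda>s. n2 s + m1 s)"
    by (intro ipL_swap_NN_MM) fact+
  also have "\<dots> = ipL p (\<lambda>s. (1 / r) *\<^sub>R g s) h"
    unfolding g h ..
  also have "\<dots> = ipL p g h / r"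
    by (simp add: ipL_eq_inner)
  finally show ?thesis using divide_nonneg_pos[OF monotone r_pos] by linarith
qed

end

section \<open>Linear convergence of the IPHA\<close>

locale ipha = svi_setting p sc stg F C r
  for p :: "'s::finite \<Rightarrow> real" and sc :: "'s \<Rightarrow> nat \<Rightarrow> 'c" and stg :: "'i::finite \<Rightarrow> nat"
    and F :: "real^'i \<Rightarrow> 's \<Rightarrow> real^'i" and C :: "'s \<Rightarrow> (real^'i) set" and r :: real +
  fixes x w xh wh :: "nat \<Rightarrow> 's \<Rightarrow> real^'i" and sigma tau :: "nat \<Rightarrow> real" and sigmabar theta :: real
  assumes sol_exists: "\<exists>xs ws. svi_solution p sc stg F C xs ws"
    and outer_lip: "outer_lipschitz_at_0 p (Sinv p sc stg F C r)"
    and x0: "x 0 \<in> NNset sc stg"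
    and w0: "w 0 \<in> MMset p (NNset sc stg)"
    and sigmabar: "sigmabar < 1"
    and sigma: "\<And>k. 0 \<le> sigma k \<and> sigma k < sigmabar"
    and theta: "theta < 1"
    and subprob: "\<And>k s. r *\<^sub>R (x k s - xh k s) - w k s - F (wh k s) s
                          \<in> normal_cone (C s) (wh k s)"
    and inexact: "\<And>k. (normL p (\<lambda>s. wh k s - xh k s))\<^sup>2
         \<le> (sigma k)\<^sup>2 * ((normL p (ipha_a p sc stg (x k) (xh k) (wh k)))\<^sup>2
                         + (normL p (ipha_b p sc stg (x k) (xh k) (wh k)))\<^sup>2)"
    and no_stop: "\<And>k. ipha_b p sc stg (x k) (xh k) (wh k) \<noteq> (\<lambda>s. 0)"
    and tau: "\<And>k. 1 - theta \<le> tau k \<and> tau k \<le> 1 + theta"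
    and x_upd: "\<And>k. x (Suc k) = (\<lambda>s. x k s - (tau k * (ipL p (ipha_a p sc stg (x k) (xh k) (wh k))
                                                         (ipha_b p sc stg (x k) (xh k) (wh k))
                                      / (normL p (ipha_a p sc stg (x k) (xh k) (wh k)))\<^sup>2))
                                   *\<^sub>R (x k s - PN p sc stg (xh k) s))"
    and w_upd: "\<And>k. w (Suc k) = (\<lambda>s. w k s + (tau k * (ipL p (ipha_a p sc stg (x k) (xh k) (wh k))
                                                         (ipha_b p sc stg (x k) (xh k) (wh k))
                                      / (normL p (ipha_a p sc stg (x k) (xh k) (wh k)))\<^sup>2) * r)
                                   *\<^sub>R PM p sc stg (wh k) s)"
begin

abbreviation iter_a :: "nat \<Rightarrow> 's \<Rightarrow> real^'i" where
  "iter_a k \<equiv> ipha_a p sc stg (x k) (xh k) (wh k)"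

abbreviation iter_b :: "nat \<Rightarrow> 's \<Rightarrow> real^'i" where
  "iter_b k \<equiv> ipha_b p sc stg (x k) (xh k) (wh k)"

abbreviation iter_z :: "nat \<Rightarrow> 's \<Rightarrow> real^'i" where
  "iter_z k \<equiv> \<lambda>s. x k s - (1 / r) *\<^sub>R w k s"

abbreviation step_size :: "nat \<Rightarrow> real" where
  "step_size k \<equiv> tau k * (ipL p (iter_a k) (iter_b k) / (normL p (iter_a k))\<^sup>2)"

lemma iterates_in_NN_MM: "x k \<in> NN \<and> w k \<in> MM"
proof (induction k)
  case 0
  show ?case using x0 w0 by simp
next
  case (Suc k)
  then show ?case
    unfolding x_upd w_upd
    by (intro conjI subspaceL_diff subspaceL_add subspaceL_scaleR subspaceL_NNset subspaceL_MMset
        projN_in_NN projM_in_MM) simp_all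
qed

lemma embL_iter_z_Suc:
  "embL p (iter_z (Suc k)) = embL p (iter_z k) - step_size k *\<^sub>R embL p (iter_a k)"
  using r_pos by (simp add: x_upd w_upd ipha_a_def algebra_simps)

lemma relative_error:
  "(1 - sigmabar\<^sup>2) * ((normL p (iter_a k))\<^sup>2 + (normL p (iter_b k))\<^sup>2)
     \<le> 2 * ipL p (iter_a k) (iter_b k)"
proof -
  let ?A = "embL p (iter_a k)" and ?B = "embL p (iter_b k)"
  have "?A - ?B = embL p (\<lambda>s. wh k s - xh k s)"
    using embL_proj_decomposition[of "xh k"] embL_proj_decomposition[of "wh k"]
    by (simp add: ipha_a_def ipha_b_def algebra_simps)
  then have "(norm (?A - ?B))\<^sup>2 \<le> (sigma k)\<^sup>2 * ((norm ?A)\<^sup>2 + (norm ?B)\<^sup>2)"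
    using inexact[of k] unfolding normL_eq_norm by simp
  also have "\<dots> \<le> sigmabar\<^sup>2 * ((norm ?A)\<^sup>2 + (norm ?B)\<^sup>2)"
    using sigma[of k] by (intro mult_right_mono power_mono) simp_all
  finally show ?thesis
    using inner_lower_bound_of_relative_error by (simp add: normL_eq_norm ipL_eq_inner)
qed

lemma local_error_bound:
  "\<exists>\<delta> K. 0 < \<delta> \<and> (\<forall>k. normL p (iter_a k) \<le> \<delta> \<longrightarrow>
      (\<exists>u\<in>Sinv0. normL p (\<lambda>s. iter_z k s - u s) \<le> normL p (iter_b k) + K * normL p (iter_a k)))"
proof -
  obtain L1 L2 where "0 < L2" and lip: "\<And>v u. normL p v \<le> L2 \<Longrightarrow> u \<in> Sinv p sc stg F C r v \<Longrightarrow>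
      \<exists>u0\<in>Sinv0. normL p (\<lambda>s. u s - u0 s) \<le> L1 * normL p v"
    using outer_lip unfolding outer_lipschitz_at_0_def by blast
  have "\<exists>u\<in>Sinv0. normL p (\<lambda>s. iter_z k s - u s)
          \<le> normL p (iter_b k) + (L1 * r) * normL p (iter_a k)"
    if small: "normL p (iter_a k) \<le> L2 / r" for k
  proof -
    define v where "v = (\<lambda>s. projN (wh k) s - projM (xh k) s - (1 / r) *\<^sub>R w k s)"
    have "normL p (\<lambda>s. r *\<^sub>R iter_a k s) = r * normL p (iter_a k)"
      using r_pos by (simp add: normL_eq_norm)
    moreover have "v \<in> Sinv p sc stg F C r (\<lambda>s. r *\<^sub>R iter_a k s)"
      unfolding v_def using iterates_in_NN_MM subprob by (intro subproblem_in_Sinv) auto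
    moreover have "r * normL p (iter_a k) \<le> L2"
      using small r_pos by (simp add: pos_le_divide_eq mult.commute)
    ultimately obtain u0 where "u0 \<in> Sinv0"
      and u0: "normL p (\<lambda>s. v s - u0 s) \<le> L1 * (r * normL p (iter_a k))"
      using lip by force
    have "normL p (\<lambda>s. iter_z k s - u0 s) = norm (embL p (iter_b k) + embL p (\<lambda>s. v s - u0 s))"
      by (simp add: normL_eq_norm v_def ipha_b_def algebra_simps)
    also have "\<dots> \<le> normL p (iter_b k) + normL p (\<lambda>s. v s - u0 s)"
      unfolding normL_eq_norm by (rule norm_triangle_ineq)
    finally have "normL p (\<lambda>s. iter_z k s - u0 s) \<le> normL p (iter_b k) + normL p (\<lambda>s. v s - u0 s)" .
    then show ?thesis using \<open>u0 \<in> Sinv0\<close> u0 by (intro bexI[of _ u0]) (simp_all add: mult.assoc)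
  qed
  then show ?thesis using \<open>0 < L2\<close> r_pos by (intro exI[of _ "L2 / r"] exI[of _ "L1 * r"]) simp
qed

theorem iterates_converge_linearly:
  "\<exists>u\<in>Sinv0. \<exists>c q. 0 \<le> c \<and> 0 \<le> q \<and> q < 1 \<and> (\<forall>k. normL p (\<lambda>s. iter_z k s - u s) \<le> c * q ^ k)"
proof -
  obtain \<delta> K where "0 < \<delta>" and error_bound: "\<And>k. normL p (iter_a k) \<le> \<delta> \<Longrightarrow>
      \<exists>u\<in>Sinv0. normL p (\<lambda>s. iter_z k s - u s) \<le> normL p (iter_b k) + K * normL p (iter_a k)"
    using local_error_bound by blast
  have "\<exists>v\<in>embL p ` Sinv0. \<exists>c q. 0 \<le> c \<and> 0 \<le> q \<and> q < 1 \<and>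
          (\<forall>k. dist (embL p (iter_z k)) v \<le> c * q ^ k)"
  proof (rule projective_method_linear_convergence[where a = "\<lambda>k. embL p (iter_a k)"
        and b = "\<lambda>k. embL p (iter_b k)" and e = "1 - sigmabar\<^sup>2" and \<tau> = tau and \<theta> = theta
        and \<delta> = \<delta> and K = K])
    show "closed (embL p ` Sinv0)"
      using outer_lip by (intro closed_embL_image) (simp add: outer_lipschitz_at_0_def)
    show "embL p ` Sinv0 \<noteq> {}" using sol_exists svi_solution_in_Sinv0 by blast
    show "0 < 1 - sigmabar\<^sup>2"
      using sigma[of 0] sigmabar by (simp add: power_less_one_iff)
    show "\<bar>tau k - 1\<bar> \<le> theta" for k using tau[of k] by linarith
    show "theta < 1" by (rule theta)
    show "0 < \<delta>" by fact
    fix k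
    show "inner (embL p (iter_a k)) (embL p (iter_b k))
        \<le> inner (embL p (iter_a k)) (embL p (iter_z k) - v)" if "v \<in> embL p ` Sinv0" for v
      using that iterates_in_NN_MM subprob subproblem_halfspace_contains_Sinv0
      by (auto simp: ipL_eq_inner)
    show "(1 - sigmabar\<^sup>2) * ((norm (embL p (iter_a k)))\<^sup>2 + (norm (embL p (iter_b k)))\<^sup>2)
        \<le> 2 * inner (embL p (iter_a k)) (embL p (iter_b k))"
      using relative_error[of k] by (simp add: normL_eq_norm ipL_eq_inner)
    show "embL p (iter_b k) \<noteq> 0" using no_stop[of k] embL_eq_iff[of "iter_b k" "\<lambda>s. 0"] by simp
    show "embL p (iter_z (Suc k)) = embL p (iter_z k)
        - (tau k * (inner (embL p (iter_a k)) (embL p (iter_b k)) / (norm (embL p (iter_a k)))\<^sup>2))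
          *\<^sub>R embL p (iter_a k)"
      using embL_iter_z_Suc by (simp add: normL_eq_norm ipL_eq_inner)
    show "infdist (embL p (iter_z k)) (embL p ` Sinv0)
        \<le> norm (embL p (iter_b k)) + K * norm (embL p (iter_a k))"
      if small: "norm (embL p (iter_a k)) \<le> \<delta>"
    proof -
      obtain u where "u \<in> Sinv0"
        and "normL p (\<lambda>s. iter_z k s - u s) \<le> normL p (iter_b k) + K * normL p (iter_a k)"
        using error_bound[of k] small by (auto simp: normL_eq_norm)
      then show ?thesis
        by (intro infdist_le2[where a = "embL p u"]) (auto simp: normL_eq_norm dist_norm)
    qed
  qed
  then show ?thesis by (auto simp: dist_norm normL_eq_norm)
qed

end

theorem corollary3:
  fixes p :: "'s::finite \<Rightarrow> real"
    and sc :: "'s \<Rightarrow> nat \<Rightarrow> 'c"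
    and N :: nat
    and stg :: "'i::finite \<Rightarrow> nat"
    and C :: "'s \<Rightarrow> (real^'i) set"
    and F :: "real^'i \<Rightarrow> 's \<Rightarrow> real^'i"
    and r sigmabar theta :: real
    and x w xh wh :: "nat \<Rightarrow> 's \<Rightarrow> real^'i"
    and sigma tau :: "nat \<Rightarrow> real"
  assumes p_pos: "\<And>s. p s > 0"
    and p_sum: "(\<Sum>s\<in>UNIV. p s) = 1"
    and sc_inj: "inj sc"
    and stg_range: "\<And>i. 1 \<le> stg i \<and> stg i \<le> N"
    and C_ne: "\<And>s. C s \<noteq> {}"
    and C_closed: "\<And>s. closed (C s)"
    and C_convex: "\<And>s. convex (C s)"
    and F_cont: "\<And>s. continuous_on UNIV (\<lambda>y. F y s)"
    and F_mono: "\<And>s y z. inner (F y s - F z s) (y - z) \<ge> 0"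
    and r_pos: "r > 0"
    and sol_exists: "\<exists>xs ws. svi_solution p sc stg F C xs ws"
    and outer_lip: "outer_lipschitz_at_0 p (Sinv p sc stg F C r)"
    and x0: "x 0 \<in> NNset sc stg"
    and w0: "w 0 \<in> MMset p (NNset sc stg)"
    and sigmabar: "0 < sigmabar" "sigmabar < 1"
    and theta: "0 < theta" "theta < 1"
    and sigma: "\<And>k. 0 \<le> sigma k \<and> sigma k < sigmabar"
    and subprob: "\<And>k s. r *\<^sub>R (x k s - xh k s) - w k s - F (wh k s) s
                          \<in> normal_cone (C s) (wh k s)"
    and inexact: "\<And>k. (normL p (\<lambda>s. wh k s - xh k s))\<^sup>2
         \<le> (sigma k)\<^sup>2 * ((normL p (ipha_a p sc stg (x k) (xh k) (wh k)))\<^sup>2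
                         + (normL p (ipha_b p sc stg (x k) (xh k) (wh k)))\<^sup>2)"
    and no_stop: "\<And>k. ipha_b p sc stg (x k) (xh k) (wh k) \<noteq> (\<lambda>s. 0)"
    and tau: "\<And>k. 1 - theta \<le> tau k \<and> tau k \<le> 1 + theta"
    and x_upd: "\<And>k. x (Suc k) = (\<lambda>s. x k s - (tau k * (ipL p (ipha_a p sc stg (x k) (xh k) (wh k))
                                                         (ipha_b p sc stg (x k) (xh k) (wh k))
                                      / (normL p (ipha_a p sc stg (x k) (xh k) (wh k)))\<^sup>2))
                                   *\<^sub>R (x k s - PN p sc stg (xh k) s))"
    and w_upd: "\<And>k. w (Suc k) = (\<lambda>s. w k s + (tau k * (ipL p (ipha_a p sc stg (x k) (xh k) (wh k))
                                                         (ipha_b p sc stg (x k) (xh k) (wh k))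
                                      / (normL p (ipha_a p sc stg (x k) (xh k) (wh k)))\<^sup>2) * r)
                                   *\<^sub>R PM p sc stg (wh k) s)"
  shows "\<exists>xs ws. svi_solution p sc stg F C xs ws \<and>
           (\<exists>c q. c \<ge> 0 \<and> 0 \<le> q \<and> q < 1 \<and>
              (\<forall>k. sqrt ((normL p (\<lambda>s. x k s - xs s))\<^sup>2 + (normL p (\<lambda>s. w k s - ws s))\<^sup>2 / r\<^sup>2)
                     \<le> c * q ^ k))"
proof -
  interpret ipha p sc stg F C r x w xh wh sigma tau sigmabar theta
    by unfold_locales (use assms in auto)
  obtain u c q where "u \<in> Sinv0" "0 \<le> c" "0 \<le> q" "q < 1"
    and bound: "\<And>k. normL p (\<lambda>s. x k s - (1 / r) *\<^sub>R w k s - u s) \<le> c * q ^ k"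
    using iterates_converge_linearly by blast
  obtain xs ws where "svi_solution p sc stg F C xs ws"
    and distance: "\<And>x w. x \<in> NNset sc stg \<Longrightarrow> w \<in> MMset p (NNset sc stg) \<Longrightarrow>
        sqrt ((normL p (\<lambda>s. x s - xs s))\<^sup>2 + (normL p (\<lambda>s. w s - ws s))\<^sup>2 / r\<^sup>2)
          = normL p (\<lambda>s. x s - (1 / r) *\<^sub>R w s - u s)"
    using solution_of_Sinv0[OF \<open>u \<in> Sinv0\<close>] by blast
  have "sqrt ((normL p (\<lambda>s. x k s - xs s))\<^sup>2 + (normL p (\<lambda>s. w k s - ws s))\<^sup>2 / r\<^sup>2) \<le> c * q ^ k"
    for k
    using distance iterates_in_NN_MM bound by simp
  then show ?thesis
    using \<open>svi_solution p sc stg F C xs ws\<close> \<open>0 \<le> c\<close> \<open>0 \<le> q\<close> \<open>q < 1\<close> by blast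
qed

end
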